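(* With the matrices defined in the context, $\mathbf{A_N}$ is invertible and $$\mathbf{A_N}^{-1}=(\mathbf{B}^T\mathbf{B})^\dagger+(\mathbf{C}^T\mathbf{C})^\dagger .$$
   Context: Fix an integer $n\ge 2$ and set $h=1/n$. Let $I_m$ denote the $m\times m$ identity matrix and $\otimes$ the Kronecker product. Let $\mathrm{B}\in\mathbb{R}^{n\times(n-1)}$ be $\mathrm{B}=\frac1h M$, where $M_{i,i}=1$ and $M_{i+1,i}=-1$ for $1\le i\le n-1$, all other entries $0$. Define $\mathrm{B}^u_x=I_n\otimes \mathrm{B}$, $\mathrm{B}^v_y=\mathrm{B}\otimes I_n$, $\mathrm{B}^q_x=I_{n-1}\otimes\mathrm{B}$, $\mathrm{B}^q_y=\mathrm{B}\otimes I_{n-1}$. Let $\mathbf{B}=\begin{bmatrix}-\mathrm{B}^u_x & -\mathrm{B}^v_y\end{bmatrix}\in\mathbb{R}^{n^2\times 2n(n-1)}$ and $\mathbf{C}=\begin{bmatrix}-(\mathrm{B}^q_y)^T & (\mathrm{B}^q_x)^T\end{bmatrix}\in\mathbb{R}^{(n-1)^2\times 2n(n-1)}$, and let $\mathbf{A_N}=\mathbf{B}^T\mathbf{B}+\mathbf{C}^T\mathbf{C}$ (the Neumann velocity Laplacian). The superscript $\dagger$ denotes the Moore–Penrose pseudoinverse. *)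

theory Defs
  imports "Jordan_Normal_Form.Matrix"
begin

definition kron :: "'a::times mat \<Rightarrow> 'a mat \<Rightarrow> 'a mat" where
  "kron A B = mat (dim_row A * dim_row B) (dim_col A * dim_col B)
     (\<lambda>(i,j). A $$ (i div dim_row B, j div dim_col B) * B $$ (i mod dim_row B, j mod dim_col B))"

definition hcat :: "'a mat \<Rightarrow> 'a mat \<Rightarrow> 'a mat" where
  "hcat X Y = mat (dim_row X) (dim_col X + dim_col Y)
     (\<lambda>(i,j). if j < dim_col X then X $$ (i,j) else Y $$ (i, j - dim_col X))"

definition is_MP_pinv :: "real mat \<Rightarrow> real mat \<Rightarrow> bool" where
  "is_MP_pinv A X \<longleftrightarrow> X \<in> carrier_mat (dim_col A) (dim_row A) \<and>
     A * X * A = A \<and> X * A * X = X \<and>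
     (A * X)\<^sup>T = A * X \<and> (X * A)\<^sup>T = X * A"

definition pinv :: "real mat \<Rightarrow> real mat" where
  "pinv A = (THE X. is_MP_pinv A X)"

definition Mmat :: "nat \<Rightarrow> real mat" where
  "Mmat n = mat n (n - 1) (\<lambda>(i,j). if i = j then 1 else if i = j + 1 then -1 else 0)"

(* B = (1/h) M with h = 1/n *)
definition Bmat :: "nat \<Rightarrow> real mat" where
  "Bmat n = (1 / (1 / real n)) \<cdot>\<^sub>m Mmat n"

definition Bux :: "nat \<Rightarrow> real mat" where "Bux n = kron (1\<^sub>m n) (Bmat n)"
definition Bvy :: "nat \<Rightarrow> real mat" where "Bvy n = kron (Bmat n) (1\<^sub>m n)"
definition Bqx :: "nat \<Rightarrow> real mat" where "Bqx n = kron (1\<^sub>m (n - 1)) (Bmat n)"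
definition Bqy :: "nat \<Rightarrow> real mat" where "Bqy n = kron (Bmat n) (1\<^sub>m (n - 1))"

definition BB :: "nat \<Rightarrow> real mat" where "BB n = hcat (- Bux n) (- Bvy n)"
definition CC :: "nat \<Rightarrow> real mat" where "CC n = hcat (- (Bqy n)\<^sup>T) ((Bqx n)\<^sup>T)"

definition AN :: "nat \<Rightarrow> real mat" where
  "AN n = (BB n)\<^sup>T * BB n + (CC n)\<^sup>T * CC n"

end

(* Write P = B^T B and Q = C^T C, so that A_N = P + Q.  Since B C^T = 0 (the discrete divergence
   annihilates discrete curls: both block products equal B (x) B), we get P Q = Q P = 0.

   A_N is invertible: A_N x = 0 forces B x = 0 and C x = 0.  Split x = (u, v).  Pairing
   B^u_x u + B^v_y v = 0 with B^u_x u and (B^q_y)^T u = (B^q_x)^T v with (B^q_y)^T u, the cross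
   terms cancel because (B^u_x)^T B^v_y = B^q_y (B^q_x)^T = B (x) B^T; hence B^u_x u = 0, and as
   B has a left inverse (scaled cumulative sums), u = 0 and then v = 0.

   For an invertible sum A = P + Q of symmetric matrices with P Q = 0, the inverse Ai is
   symmetric and commutes with P and Q, P Ai P = P, and Ai P Ai satisfies the four Moore-Penrose
   conditions for P.  Thus pinv P + pinv Q = Ai (P + Q) Ai = Ai. *)

theory Submission
  imports Defs "Jordan_Normal_Form.Determinant"
begin

lemma sum_atLeast0_mult_div_mod:
  "(\<Sum>k\<in>{0..<a * b}. f (k div b) (k mod b)) = (\<Sum>p\<in>{0..<a}. \<Sum>q\<in>{0..<b}. f p q)"
  for a b :: nat
proof (induction a)
  case (Suc a)
  have "(\<Sum>k\<in>{0..<Suc a * b}. f (k div b) (k mod b))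
        = (\<Sum>k\<in>{0..<a * b}. f (k div b) (k mod b)) + (\<Sum>k\<in>{a * b..<a * b + b}. f (k div b) (k mod b))"
    by (simp add: sum.atLeastLessThan_concat add.commute)
  also have "(\<Sum>k\<in>{a * b..<a * b + b}. f (k div b) (k mod b))
        = (\<Sum>q\<in>{0..<b}. f ((q + a * b) div b) ((q + a * b) mod b))"
    using sum.shift_bounds_nat_ivl[of "\<lambda>k. f (k div b) (k mod b)" 0 "a * b" b]
    by (simp add: add.commute)
  also have "\<dots> = (\<Sum>q\<in>{0..<b}. f a q)"
    by (rule sum.cong) auto
  finally show ?case
    using Suc by simp
qed simp

lemma mod_less_of_less_mult: "i < a * b \<Longrightarrow> i mod b < b" for i a b :: nat
  by (cases b) auto

lemma dim_kron [simp]: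
  "dim_row (kron A B) = dim_row A * dim_row B"
  "dim_col (kron A B) = dim_col A * dim_col B"
  by (simp_all add: kron_def)

lemma index_kron [simp]:
  "i < dim_row A * dim_row B \<Longrightarrow> j < dim_col A * dim_col B \<Longrightarrow>
   kron A B $$ (i, j) = A $$ (i div dim_row B, j div dim_col B) * B $$ (i mod dim_row B, j mod dim_col B)"
  by (simp add: kron_def)

lemma kron_carrier_mat [simp]:
  "A \<in> carrier_mat a1 a2 \<Longrightarrow> B \<in> carrier_mat b1 b2 \<Longrightarrow> kron A B \<in> carrier_mat (a1 * b1) (a2 * b2)"
  by (metis carrier_matD carrier_matI dim_kron)

lemma transpose_kron: "(kron A B)\<^sup>T = kron A\<^sup>T B\<^sup>T"
  by (rule eq_matI) (auto simp: less_mult_imp_div_less mod_less_of_less_mult)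

lemma kron_mult:
  fixes A :: "'a::comm_semiring_1 mat"
  assumes A: "A \<in> carrier_mat a1 a2" and C: "C \<in> carrier_mat a2 a3"
    and B: "B \<in> carrier_mat b1 b2" and D: "D \<in> carrier_mat b2 b3"
  shows "kron A B * kron C D = kron (A * C) (B * D)"
proof (rule eq_matI)
  fix i j assume "i < dim_row (kron (A * C) (B * D))" "j < dim_col (kron (A * C) (B * D))"
  then have i: "i < a1 * b1" and j: "j < a3 * b3" using A B C D by auto
  let ?a = "\<lambda>p. A $$ (i div b1, p) * C $$ (p, j div b3)"
  let ?b = "\<lambda>q. B $$ (i mod b1, q) * D $$ (q, j mod b3)"
  have "(kron A B * kron C D) $$ (i, j) = (\<Sum>k\<in>{0..<a2 * b2}. ?a (k div b2) * ?b (k mod b2))"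
    using i j A B C D by (auto simp: scalar_prod_def algebra_simps intro: sum.cong)
  also have "\<dots> = (\<Sum>p\<in>{0..<a2}. \<Sum>q\<in>{0..<b2}. ?a p * ?b q)"
    by (rule sum_atLeast0_mult_div_mod)
  also have "\<dots> = kron (A * C) (B * D) $$ (i, j)"
    using i j A B C D
    by (simp add: scalar_prod_def sum_product less_mult_imp_div_less mod_less_of_less_mult)
  finally show "(kron A B * kron C D) $$ (i, j) = kron (A * C) (B * D) $$ (i, j)" .
qed (use A B C D in auto)

lemma kron_one_mat: "kron (1\<^sub>m p) (1\<^sub>m q) = (1\<^sub>m (p * q) :: 'a::semiring_1 mat)"
proof (rule eq_matI)
  fix i j assume "i < dim_row (1\<^sub>m (p * q) :: 'a mat)" "j < dim_col (1\<^sub>m (p * q) :: 'a mat)"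
  then have i: "i < p * q" and j: "j < p * q" by auto
  have "i = j \<longleftrightarrow> i div q = j div q \<and> i mod q = j mod q"
    by (metis div_mult_mod_eq)
  then show "kron (1\<^sub>m p) (1\<^sub>m q) $$ (i, j) = (1\<^sub>m (p * q) :: 'a mat) $$ (i, j)"
    using i j by (simp add: less_mult_imp_div_less mod_less_of_less_mult)
qed auto

lemma dim_hcat [simp]:
  "dim_row (hcat X Y) = dim_row X"
  "dim_col (hcat X Y) = dim_col X + dim_col Y"
  by (simp_all add: hcat_def)

lemma hcat_carrier_mat [simp]:
  "X \<in> carrier_mat r c1 \<Longrightarrow> Y \<in> carrier_mat r c2 \<Longrightarrow> hcat X Y \<in> carrier_mat r (c1 + c2)"
  by (metis carrier_matD carrier_matI dim_hcat)

lemma row_hcat: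
  assumes "X \<in> carrier_mat r c1" "Y \<in> carrier_mat r c2" "i < r"
  shows "row (hcat X Y) i = row X i @\<^sub>v row Y i"
  using assms by (intro eq_vecI) (auto simp: hcat_def)

lemma hcat_mult_append_vec:
  fixes X :: "'a::comm_semiring_1 mat"
  assumes X: "X \<in> carrier_mat r c1" and Y: "Y \<in> carrier_mat r c2"
    and u: "u \<in> carrier_vec c1" and v: "v \<in> carrier_vec c2"
  shows "hcat X Y *\<^sub>v (u @\<^sub>v v) = X *\<^sub>v u + Y *\<^sub>v v"
  using assms by (intro eq_vecI) (auto simp: row_hcat scalar_prod_append[of _ c1 _ c2])

lemma hcat_mult_transpose_hcat:
  fixes X :: "'a::comm_semiring_1 mat"
  assumes X: "X \<in> carrier_mat r c1" and Y: "Y \<in> carrier_mat r c2"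
    and Z: "Z \<in> carrier_mat s c1" and W: "W \<in> carrier_mat s c2"
  shows "hcat X Y * (hcat Z W)\<^sup>T = X * Z\<^sup>T + Y * W\<^sup>T"
  using assms by (intro eq_matI) (auto simp: row_hcat scalar_prod_append[of _ c1 _ c2])

lemma is_MP_pinv_carrier_mat:
  "A \<in> carrier_mat m n \<Longrightarrow> is_MP_pinv A X \<Longrightarrow> X \<in> carrier_mat n m"
  by (simp add: is_MP_pinv_def)

lemma is_MP_pinv_mult_left_eq:
  fixes A :: "real mat"
  assumes A: "A \<in> carrier_mat m n" and X: "is_MP_pinv A X" and Y: "is_MP_pinv A Y"
  shows "A * X = A * Y"
proof -
  have Xc: "X \<in> carrier_mat n m" and Yc: "Y \<in> carrier_mat n m"
    using A X Y by (simp_all add: is_MP_pinv_carrier_mat)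
  have AXc: "A * X \<in> carrier_mat m m" and AYc: "A * Y \<in> carrier_mat m m"
    using A Xc Yc by simp_all
  have "A * X = (A * X)\<^sup>T"
    using X by (simp add: is_MP_pinv_def)
  also have "\<dots> = X\<^sup>T * A\<^sup>T"
    using transpose_mult[OF A Xc] .
  also have "A\<^sup>T = (A * Y * A)\<^sup>T"
    using Y by (simp add: is_MP_pinv_def)
  also have "\<dots> = A\<^sup>T * (A * Y)\<^sup>T"
    using transpose_mult[OF AYc A] .
  also have "X\<^sup>T * (A\<^sup>T * (A * Y)\<^sup>T) = (X\<^sup>T * A\<^sup>T) * (A * Y)\<^sup>T"
    using A Xc AYc by (simp add: assoc_mult_mat[of _ m n _ m _ m])
  also have "X\<^sup>T * A\<^sup>T = A * X"
    using X transpose_mult[OF A Xc] by (simp add: is_MP_pinv_def)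
  also have "(A * Y)\<^sup>T = A * Y"
    using Y by (simp add: is_MP_pinv_def)
  also have "A * X * (A * Y) = A * X * A * Y"
    by (rule assoc_mult_mat[OF AXc A Yc, symmetric])
  also have "A * X * A = A"
    using X by (simp add: is_MP_pinv_def)
  finally show ?thesis .
qed

lemma is_MP_pinv_mult_right_eq:
  fixes A :: "real mat"
  assumes A: "A \<in> carrier_mat m n" and X: "is_MP_pinv A X" and Y: "is_MP_pinv A Y"
  shows "X * A = Y * A"
proof -
  have Xc: "X \<in> carrier_mat n m" and Yc: "Y \<in> carrier_mat n m"
    using A X Y by (simp_all add: is_MP_pinv_carrier_mat)
  have XAc: "X * A \<in> carrier_mat n n" and YAc: "Y * A \<in> carrier_mat n n"
    using A Xc Yc by simp_all
  have "X * A = (X * A)\<^sup>T"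
    using X by (simp add: is_MP_pinv_def)
  also have "\<dots> = A\<^sup>T * X\<^sup>T"
    using transpose_mult[OF Xc A] .
  also have "A\<^sup>T = (A * (Y * A))\<^sup>T"
    using Y A Yc by (simp add: is_MP_pinv_def)
  also have "\<dots> = (Y * A)\<^sup>T * A\<^sup>T"
    using transpose_mult[OF A YAc] .
  also have "(Y * A)\<^sup>T * A\<^sup>T * X\<^sup>T = (Y * A)\<^sup>T * (A\<^sup>T * X\<^sup>T)"
    using A Xc YAc by (simp add: assoc_mult_mat[of _ n n _ m _ n])
  also have "A\<^sup>T * X\<^sup>T = X * A"
    using X transpose_mult[OF Xc A] by (simp add: is_MP_pinv_def)
  also have "(Y * A)\<^sup>T = Y * A"
    using Y by (simp add: is_MP_pinv_def)
  also have "Y * A * (X * A) = Y * (A * X * A)"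
    using A Xc Yc by (simp add: assoc_mult_mat[of _ n m _ n _ n] assoc_mult_mat[of _ m n _ m _ n])
  also have "A * X * A = A"
    using X by (simp add: is_MP_pinv_def)
  finally show ?thesis .
qed

lemma is_MP_pinv_unique:
  fixes A :: "real mat"
  assumes X: "is_MP_pinv A X" and Y: "is_MP_pinv A Y"
  shows "X = Y"
proof -
  obtain m n where A: "A \<in> carrier_mat m n" by blast
  have Xc: "X \<in> carrier_mat n m" and Yc: "Y \<in> carrier_mat n m"
    using A X Y by (simp_all add: is_MP_pinv_carrier_mat)
  have "X = X * A * X"
    using X by (simp add: is_MP_pinv_def)
  also have "\<dots> = X * (A * Y)"
    using assoc_mult_mat[OF Xc A Xc] is_MP_pinv_mult_left_eq[OF A X Y] by simp
  also have "\<dots> = X * A * Y"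
    using assoc_mult_mat[OF Xc A Yc] by simp
  also have "\<dots> = Y * A * Y"
    using is_MP_pinv_mult_right_eq[OF A X Y] by simp
  also have "\<dots> = Y"
    using Y by (simp add: is_MP_pinv_def)
  finally show ?thesis .
qed

lemma pinv_eqI: "is_MP_pinv A X \<Longrightarrow> pinv A = X"
  unfolding pinv_def by (blast intro: is_MP_pinv_unique)

lemma transpose_inverse_of_symmetric:
  fixes A Ai :: "'a::comm_ring_1 mat"
  assumes A: "A \<in> carrier_mat d d" and Ai: "Ai \<in> carrier_mat d d" and A_sym: "A\<^sup>T = A"
    and inv_left: "Ai * A = 1\<^sub>m d" and inv_right: "A * Ai = 1\<^sub>m d"
  shows "Ai\<^sup>T = Ai"
proof -
  have left: "Ai\<^sup>T * A = 1\<^sub>m d"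
    using transpose_mult[OF A Ai] A_sym inv_right by simp
  have "Ai\<^sup>T = Ai\<^sup>T * (A * Ai)"
    using inv_right Ai by simp
  also have "\<dots> = Ai\<^sup>T * A * Ai"
    using A Ai by (simp add: assoc_mult_mat[of _ d d _ d _ d])
  finally show ?thesis
    using left Ai by simp
qed

lemma inverse_mat_commute:
  fixes A Ai P :: "'a::semiring_1 mat"
  assumes A: "A \<in> carrier_mat d d" and Ai: "Ai \<in> carrier_mat d d" and P: "P \<in> carrier_mat d d"
    and inv_left: "Ai * A = 1\<^sub>m d" and inv_right: "A * Ai = 1\<^sub>m d" and AP: "A * P = P * A"
  shows "Ai * P = P * Ai"
proof -
  note assoc = assoc_mult_mat[of _ d d _ d _ d]
  have "Ai * P = Ai * P * (A * Ai)"
    using inv_right Ai P by simp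
  also have "\<dots> = Ai * (A * P) * Ai"
    using A Ai P AP by (simp add: assoc)
  also have "\<dots> = Ai * A * P * Ai"
    using A Ai P by (simp add: assoc)
  finally show ?thesis
    using inv_left Ai P by simp
qed

lemma is_MP_pinv_sandwich:
  fixes P Ai :: "real mat"
  assumes P: "P \<in> carrier_mat d d" and Ai: "Ai \<in> carrier_mat d d"
    and P_sym: "P\<^sup>T = P" and Ai_sym: "Ai\<^sup>T = Ai" and Ai_P: "Ai * P = P * Ai"
    and P_Ai_P: "P * Ai * P = P"
  shows "is_MP_pinv P (Ai * P * Ai)"
proof -
  note assoc = assoc_mult_mat[of _ d d _ d _ d]
  have P_X: "P * (Ai * P * Ai) = P * Ai"
  proof -
    have "P * (Ai * P * Ai) = P * Ai * P * Ai"
      using P Ai by (simp add: assoc)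
    then show ?thesis
      using P_Ai_P by simp
  qed
  have X_P: "Ai * P * Ai * P = Ai * P"
  proof -
    have "Ai * P * Ai * P = Ai * (P * Ai * P)"
      using P Ai by (simp add: assoc)
    then show ?thesis
      using P_Ai_P by simp
  qed
  have P_Ai_sym: "(P * Ai)\<^sup>T = P * Ai"
    using transpose_mult[OF P Ai] P_sym Ai_sym Ai_P by simp
  show ?thesis
    unfolding is_MP_pinv_def
  proof (intro conjI)
    show "Ai * P * Ai \<in> carrier_mat (dim_col P) (dim_row P)"
      using P Ai by simp
    show "P * (Ai * P * Ai) * P = P"
      using P_X P_Ai_P by simp
    have "Ai * P * Ai * P * (Ai * P * Ai) = Ai * P * (Ai * P * Ai)"
      using X_P by simp
    also have "\<dots> = Ai * (P * Ai * P) * Ai"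
      using P Ai by (simp add: assoc)
    finally show "Ai * P * Ai * P * (Ai * P * Ai) = Ai * P * Ai"
      using P_Ai_P by simp
    show "(P * (Ai * P * Ai))\<^sup>T = P * (Ai * P * Ai)"
      using P_X P_Ai_sym by simp
    show "(Ai * P * Ai * P)\<^sup>T = Ai * P * Ai * P"
      using X_P P_Ai_sym Ai_P by simp
  qed
qed

lemma is_MP_pinv_orthogonal_summand:
  fixes P Q Ai :: "real mat"
  assumes P: "P \<in> carrier_mat d d" and Q: "Q \<in> carrier_mat d d" and Ai: "Ai \<in> carrier_mat d d"
    and P_sym: "P\<^sup>T = P" and Q_sym: "Q\<^sup>T = Q"
    and PQ: "P * Q = 0\<^sub>m d d" and QP: "Q * P = 0\<^sub>m d d"
    and inv_left: "Ai * (P + Q) = 1\<^sub>m d" and inv_right: "(P + Q) * Ai = 1\<^sub>m d"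
  shows "is_MP_pinv P (Ai * P * Ai)"
proof (rule is_MP_pinv_sandwich[OF P Ai P_sym])
  have PQc: "P + Q \<in> carrier_mat d d"
    using P Q by simp
  show "Ai\<^sup>T = Ai"
    using P Q P_sym Q_sym transpose_add[OF P Q]
    by (intro transpose_inverse_of_symmetric[OF PQc Ai _ inv_left inv_right]) simp
  have "(P + Q) * P = P * (P + Q)"
    using P Q PQ QP by (simp add: add_mult_distrib_mat[OF P Q P] mult_add_distrib_mat[OF P P Q])
  then show Ai_P: "Ai * P = P * Ai"
    by (rule inverse_mat_commute[OF PQc Ai P inv_left inv_right])
  have "P = P * (Ai * (P + Q))"
    using inv_left P by simp
  also have "\<dots> = P * Ai * P + P * Ai * Q"
    using P Q Ai
    by (simp add: mult_add_distrib_mat[OF Ai P Q] assoc_mult_mat[of _ d d _ d _ d]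
        mult_add_distrib_mat[OF P mult_carrier_mat[OF Ai P] mult_carrier_mat[OF Ai Q]])
  also have "P * Ai * Q = Ai * (P * Q)"
    by (metis Ai_P assoc_mult_mat[OF Ai P Q])
  finally show "P * Ai * P = P"
    using PQ P Ai by simp
qed

lemma pinv_add_orthogonal:
  fixes P Q Ai :: "real mat"
  assumes P: "P \<in> carrier_mat d d" and Q: "Q \<in> carrier_mat d d" and Ai: "Ai \<in> carrier_mat d d"
    and P_sym: "P\<^sup>T = P" and Q_sym: "Q\<^sup>T = Q" and PQ: "P * Q = 0\<^sub>m d d"
    and inv_left: "Ai * (P + Q) = 1\<^sub>m d" and inv_right: "(P + Q) * Ai = 1\<^sub>m d"
  shows "pinv P + pinv Q = Ai"
proof -
  have QP: "Q * P = 0\<^sub>m d d"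
    using transpose_mult[OF P Q] PQ P_sym Q_sym by simp
  have "pinv P = Ai * P * Ai"
    by (rule pinv_eqI, rule is_MP_pinv_orthogonal_summand[OF P Q Ai P_sym Q_sym PQ QP inv_left inv_right])
  moreover have "pinv Q = Ai * Q * Ai"
    using comm_add_mat[OF P Q] inv_left inv_right
    by (intro pinv_eqI is_MP_pinv_orthogonal_summand[OF Q P Ai Q_sym P_sym QP PQ]) simp_all
  moreover have "Ai * P * Ai + Ai * Q * Ai = Ai * (P + Q) * Ai"
    using P Q Ai by (simp add: mult_add_distrib_mat[OF Ai P Q] add_mult_distrib_mat[of _ d d])
  ultimately show ?thesis
    using inv_left Ai by simp
qed

lemma scalar_prod_mult_mat_vec:
  fixes X :: "'a::comm_semiring_0 mat"
  assumes X: "X \<in> carrier_mat r c1" and Y: "Y \<in> carrier_mat r c2"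
    and u: "u \<in> carrier_vec c1" and v: "v \<in> carrier_vec c2"
  shows "(X *\<^sub>v u) \<bullet> (Y *\<^sub>v v) = u \<bullet> ((X\<^sup>T * Y) *\<^sub>v v)"
proof -
  have "(X *\<^sub>v u) \<bullet> (Y *\<^sub>v v) = (X\<^sup>T *\<^sub>v (Y *\<^sub>v v)) \<bullet> u"
    using transpose_vec_mult_scalar[OF X u, of "Y *\<^sub>v v"] comm_scalar_prod[of "X *\<^sub>v u" r] X Y u v
    by simp
  also have "\<dots> = u \<bullet> ((X\<^sup>T * Y) *\<^sub>v v)"
    using comm_scalar_prod[OF u, of "(X\<^sup>T * Y) *\<^sub>v v"] assoc_mult_mat_vec[of "X\<^sup>T" c1 r Y c2 v] X Y v
    by simp
  finally show ?thesis .
qed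

lemma scalar_prod_self_nonneg: "0 \<le> (v :: real vec) \<bullet> v"
  using conjugate_square_ge_0_vec[of v] by simp

lemma scalar_prod_self_eq_0_iff: "(v :: real vec) \<in> carrier_vec n \<Longrightarrow> v \<bullet> v = 0 \<longleftrightarrow> v = 0\<^sub>v n"
  using conjugate_square_eq_0_vec[of v n] by simp

lemma gram_sum_kernel:
  fixes B C :: "real mat"
  assumes B: "B \<in> carrier_mat r d" and C: "C \<in> carrier_mat s d" and x: "x \<in> carrier_vec d"
    and Ax: "(B\<^sup>T * B + C\<^sup>T * C) *\<^sub>v x = 0\<^sub>v d"
  shows "B *\<^sub>v x = 0\<^sub>v r" and "C *\<^sub>v x = 0\<^sub>v s"
proof -
  have "(B *\<^sub>v x) \<bullet> (B *\<^sub>v x) + (C *\<^sub>v x) \<bullet> (C *\<^sub>v x) = x \<bullet> ((B\<^sup>T * B) *\<^sub>v x) + x \<bullet> ((C\<^sup>T * C) *\<^sub>v x)"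
    using scalar_prod_mult_mat_vec[OF B B x x] scalar_prod_mult_mat_vec[OF C C x x] by simp
  also have "\<dots> = x \<bullet> ((B\<^sup>T * B + C\<^sup>T * C) *\<^sub>v x)"
    using B C x by (simp add: add_mult_distrib_mat_vec[of _ d d] scalar_prod_add_distrib[of _ d])
  also have "\<dots> = 0"
    using Ax x by simp
  finally have "(B *\<^sub>v x) \<bullet> (B *\<^sub>v x) = 0 \<and> (C *\<^sub>v x) \<bullet> (C *\<^sub>v x) = 0"
    using scalar_prod_self_nonneg[of "B *\<^sub>v x"] scalar_prod_self_nonneg[of "C *\<^sub>v x"] by linarith
  then show "B *\<^sub>v x = 0\<^sub>v r" and "C *\<^sub>v x = 0\<^sub>v s"
    using B C x by (simp_all add: scalar_prod_self_eq_0_iff[of _ r] scalar_prod_self_eq_0_iff[of _ s])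
qed

lemma inverse_mat_if_kernel_trivial:
  fixes A :: "'a::field mat"
  assumes A: "A \<in> carrier_mat n n"
    and ker: "\<And>x. x \<in> carrier_vec n \<Longrightarrow> A *\<^sub>v x = 0\<^sub>v n \<Longrightarrow> x = 0\<^sub>v n"
  obtains Ai where "Ai \<in> carrier_mat n n" "A * Ai = 1\<^sub>m n" "Ai * A = 1\<^sub>m n"
proof -
  have "det A \<noteq> 0"
    using det_0_iff_vec_prod_zero_field[OF A] ker by blast
  from det_non_zero_imp_unit[OF A this, of "()"] show thesis
    using that unfolding Units_def ring_mat_def by auto
qed

lemma gram_sum_orthogonal_inverse:
  fixes B C :: "real mat"
  assumes B: "B \<in> carrier_mat r d" and C: "C \<in> carrier_mat s d"
    and BC: "B * C\<^sup>T = 0\<^sub>m r s"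
    and ker: "\<And>x. x \<in> carrier_vec d \<Longrightarrow> B *\<^sub>v x = 0\<^sub>v r \<Longrightarrow> C *\<^sub>v x = 0\<^sub>v s \<Longrightarrow> x = 0\<^sub>v d"
  shows "invertible_mat (B\<^sup>T * B + C\<^sup>T * C) \<and>
         inverts_mat (B\<^sup>T * B + C\<^sup>T * C) (pinv (B\<^sup>T * B) + pinv (C\<^sup>T * C)) \<and>
         inverts_mat (pinv (B\<^sup>T * B) + pinv (C\<^sup>T * C)) (B\<^sup>T * B + C\<^sup>T * C)"
proof -
  define P Q where "P = B\<^sup>T * B" and "Q = C\<^sup>T * C"
  have P: "P \<in> carrier_mat d d" and Q: "Q \<in> carrier_mat d d"
    using B C by (simp_all add: P_def Q_def)
  have P_sym: "P\<^sup>T = P" and Q_sym: "Q\<^sup>T = Q"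
    using transpose_mult[of "B\<^sup>T" d r B d] transpose_mult[of "C\<^sup>T" d s C d] B C
    by (simp_all add: P_def Q_def)
  have "P * Q = B\<^sup>T * (B * C\<^sup>T) * C"
    using B C by (simp add: P_def Q_def assoc_mult_mat[of _ d r _ d _ d] assoc_mult_mat[of _ r d _ s _ d]
        assoc_mult_mat[of _ d r _ s _ d])
  then have PQ: "P * Q = 0\<^sub>m d d"
    using BC B C by simp
  have "P + Q \<in> carrier_mat d d"
    using P Q by simp
  then obtain Ai where Ai: "Ai \<in> carrier_mat d d"
    and inv_right: "(P + Q) * Ai = 1\<^sub>m d" and inv_left: "Ai * (P + Q) = 1\<^sub>m d"
    using inverse_mat_if_kernel_trivial gram_sum_kernel[OF B C] ker unfolding P_def Q_def by metis
  have "pinv P + pinv Q = Ai"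
    by (rule pinv_add_orthogonal[OF P Q Ai P_sym Q_sym PQ inv_left inv_right])
  then show ?thesis
    using P Q Ai inv_left inv_right
    unfolding P_def[symmetric] Q_def[symmetric] invertible_mat_def inverts_mat_def square_mat.simps
    by auto
qed

lemma hcat_kernel_trivial:
  fixes X Y Z W :: "real mat"
  assumes X: "X \<in> carrier_mat r c1" and Y: "Y \<in> carrier_mat r c2"
    and Z: "Z \<in> carrier_mat s c1" and W: "W \<in> carrier_mat s c2"
    and cancel: "X\<^sup>T * Y + Z\<^sup>T * W = 0\<^sub>m c1 c2"
    and X_inj: "\<And>u. u \<in> carrier_vec c1 \<Longrightarrow> X *\<^sub>v u = 0\<^sub>v r \<Longrightarrow> u = 0\<^sub>v c1"
    and Y_inj: "\<And>v. v \<in> carrier_vec c2 \<Longrightarrow> Y *\<^sub>v v = 0\<^sub>v r \<Longrightarrow> v = 0\<^sub>v c2"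
    and x: "x \<in> carrier_vec (c1 + c2)"
    and top: "hcat X Y *\<^sub>v x = 0\<^sub>v r" and bottom: "hcat Z W *\<^sub>v x = 0\<^sub>v s"
  shows "x = 0\<^sub>v (c1 + c2)"
proof -
  define u v where "u = vec_first x c1" and "v = vec_last x c2"
  have u: "u \<in> carrier_vec c1" and v: "v \<in> carrier_vec c2" and x_split: "x = u @\<^sub>v v"
    using x by (simp_all add: u_def v_def)
  have Xu: "X *\<^sub>v u \<in> carrier_vec r" and Yv: "Y *\<^sub>v v \<in> carrier_vec r"
    and Zu: "Z *\<^sub>v u \<in> carrier_vec s" and Wv: "W *\<^sub>v v \<in> carrier_vec s"
    using X Y Z W u v by simp_all
  have top': "X *\<^sub>v u + Y *\<^sub>v v = 0\<^sub>v r" and bottom': "Z *\<^sub>v u + W *\<^sub>v v = 0\<^sub>v s"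
    using top bottom hcat_mult_append_vec[OF X Y u v] hcat_mult_append_vec[OF Z W u v] x_split by simp_all
  have cancel_v: "(X\<^sup>T * Y + Z\<^sup>T * W) *\<^sub>v v = 0\<^sub>v c1"
    unfolding cancel using v by (intro eq_vecI) auto
  \<comment> \<open>Pairing each block row with its first summand turns the cancellation hypothesis into an
    identity between squared norms.\<close>
  have "(X *\<^sub>v u) \<bullet> (X *\<^sub>v u) + (X *\<^sub>v u) \<bullet> (Y *\<^sub>v v) = 0"
    using scalar_prod_add_distrib[OF Xu Xu Yv] top' Xu by simp
  moreover have "(Z *\<^sub>v u) \<bullet> (Z *\<^sub>v u) + (Z *\<^sub>v u) \<bullet> (W *\<^sub>v v) = 0"
    using scalar_prod_add_distrib[OF Zu Zu Wv] bottom' Zu by simp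
  moreover have "(X *\<^sub>v u) \<bullet> (Y *\<^sub>v v) + (Z *\<^sub>v u) \<bullet> (W *\<^sub>v v) = u \<bullet> ((X\<^sup>T * Y + Z\<^sup>T * W) *\<^sub>v v)"
    using scalar_prod_mult_mat_vec[OF X Y u v] scalar_prod_mult_mat_vec[OF Z W u v] X Y Z W u v
    by (simp add: add_mult_distrib_mat_vec[of _ c1 c2] scalar_prod_add_distrib[of _ c1])
  moreover have "u \<bullet> ((X\<^sup>T * Y + Z\<^sup>T * W) *\<^sub>v v) = 0"
    using cancel_v u by simp
  ultimately have "(X *\<^sub>v u) \<bullet> (X *\<^sub>v u) = 0"
    using scalar_prod_self_nonneg[of "X *\<^sub>v u"] scalar_prod_self_nonneg[of "Z *\<^sub>v u"] by linarith
  then have "X *\<^sub>v u = 0\<^sub>v r"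
    using scalar_prod_self_eq_0_iff[OF Xu] by simp
  then have u0: "u = 0\<^sub>v c1" and "Y *\<^sub>v v = 0\<^sub>v r"
    using X_inj[OF u] top' Yv by simp_all
  then have v0: "v = 0\<^sub>v c2"
    using Y_inj[OF v] by simp
  show ?thesis
    using x_split u0 v0 by (intro eq_vecI) auto
qed

lemma left_inverse_kernel_trivial:
  fixes L :: "'a::semiring_1 mat"
  assumes L: "L \<in> carrier_mat c r" and X: "X \<in> carrier_mat r c" and LX: "L * X = 1\<^sub>m c"
    and u: "u \<in> carrier_vec c" and Xu: "X *\<^sub>v u = 0\<^sub>v r"
  shows "u = 0\<^sub>v c"
proof -
  have "u = (L * X) *\<^sub>v u"
    using LX u by simp
  also have "\<dots> = L *\<^sub>v (X *\<^sub>v u)"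
    using L X u by simp
  also have "\<dots> = 0\<^sub>v c"
    unfolding Xu using L by (intro eq_vecI) auto
  finally show ?thesis .
qed

definition Bmat_linv :: "nat \<Rightarrow> real mat" where
  "Bmat_linv n = mat (n - 1) n (\<lambda>(i, k). if k \<le> i then 1 / real n else 0)"

lemma dim_Bmat [simp]: "dim_row (Bmat n) = n" "dim_col (Bmat n) = n - 1"
  by (simp_all add: Bmat_def Mmat_def)

lemma dim_Bmat_linv [simp]: "dim_row (Bmat_linv n) = n - 1" "dim_col (Bmat_linv n) = n"
  by (simp_all add: Bmat_linv_def)

lemma Bmat_carrier_mat: "Bmat n \<in> carrier_mat n (n - 1)"
  by (simp add: carrier_matI)

lemma Bmat_linv_carrier_mat: "Bmat_linv n \<in> carrier_mat (n - 1) n"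
  by (simp add: carrier_matI)

lemma Bmat_linv_mult_Bmat:
  assumes n: "n > 0"
  shows "Bmat_linv n * Bmat n = 1\<^sub>m (n - 1)"
proof (rule eq_matI)
  fix i j assume "i < dim_row (1\<^sub>m (n - 1) :: real mat)" "j < dim_col (1\<^sub>m (n - 1) :: real mat)"
  then have i: "i < n - 1" and j: "j < n - 1" by auto
  have "(Bmat_linv n * Bmat n) $$ (i, j) = (\<Sum>k\<in>{0..<n}. Bmat_linv n $$ (i, k) * Bmat n $$ (k, j))"
    using i j by (simp add: scalar_prod_def)
  also have "\<dots> = (\<Sum>k\<in>{0..<n}. (if k = j then (if j \<le> i then 1 else 0) else 0)
                       - (if k = j + 1 then (if j + 1 \<le> i then 1 else 0) else 0))"
    using i j n by (intro sum.cong) (auto simp: Bmat_linv_def Bmat_def Mmat_def)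
  also have "\<dots> = (if j \<le> i then 1 else 0) - (if j + 1 \<le> i then 1 else 0)"
    using i j by (auto simp: sum_subtractf)
  finally show "(Bmat_linv n * Bmat n) $$ (i, j) = (1\<^sub>m (n - 1) :: real mat) $$ (i, j)"
    using i j by auto
qed auto

lemma dim_Bux [simp]: "dim_row (Bux n) = n * n" "dim_col (Bux n) = n * (n - 1)"
  by (simp_all add: Bux_def)

lemma dim_Bvy [simp]: "dim_row (Bvy n) = n * n" "dim_col (Bvy n) = (n - 1) * n"
  by (simp_all add: Bvy_def)

lemma dim_Bqx [simp]: "dim_row (Bqx n) = (n - 1) * n" "dim_col (Bqx n) = (n - 1) * (n - 1)"
  by (simp_all add: Bqx_def)

lemma dim_Bqy [simp]: "dim_row (Bqy n) = n * (n - 1)" "dim_col (Bqy n) = (n - 1) * (n - 1)"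
  by (simp_all add: Bqy_def)

lemma Bux_carrier_mat: "Bux n \<in> carrier_mat (n * n) (n * (n - 1))"
  by (rule carrier_matI) simp_all

lemma Bvy_carrier_mat: "Bvy n \<in> carrier_mat (n * n) ((n - 1) * n)"
  by (rule carrier_matI) simp_all

lemma transpose_Bqx_carrier_mat: "(Bqx n)\<^sup>T \<in> carrier_mat ((n - 1) * (n - 1)) ((n - 1) * n)"
  by (rule carrier_matI) simp_all

lemma transpose_Bqy_carrier_mat: "(Bqy n)\<^sup>T \<in> carrier_mat ((n - 1) * (n - 1)) (n * (n - 1))"
  by (rule carrier_matI) simp_all

lemma BB_carrier_mat: "BB n \<in> carrier_mat (n * n) (n * (n - 1) + (n - 1) * n)"
  unfolding BB_def by (intro hcat_carrier_mat uminus_carrier_mat Bux_carrier_mat Bvy_carrier_mat)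

lemma CC_carrier_mat: "CC n \<in> carrier_mat ((n - 1) * (n - 1)) (n * (n - 1) + (n - 1) * n)"
  unfolding CC_def
  by (intro hcat_carrier_mat uminus_carrier_mat transpose_Bqy_carrier_mat transpose_Bqx_carrier_mat)

lemma Bux_mult_Bqy: "Bux n * Bqy n = kron (Bmat n) (Bmat n)"
  unfolding Bux_def Bqy_def
  using kron_mult[OF one_carrier_mat Bmat_carrier_mat Bmat_carrier_mat one_carrier_mat] by simp

lemma Bvy_mult_Bqx: "Bvy n * Bqx n = kron (Bmat n) (Bmat n)"
  unfolding Bvy_def Bqx_def
  using kron_mult[OF Bmat_carrier_mat one_carrier_mat one_carrier_mat Bmat_carrier_mat] by simp

lemma transpose_Bux_mult_Bvy: "(Bux n)\<^sup>T * Bvy n = kron (Bmat n) ((Bmat n)\<^sup>T)"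
  unfolding Bux_def Bvy_def transpose_kron
  using kron_mult[OF one_carrier_mat Bmat_carrier_mat transpose_carrier_mat[THEN iffD2, OF Bmat_carrier_mat]
      one_carrier_mat]
  by simp

lemma Bqy_mult_transpose_Bqx: "Bqy n * (Bqx n)\<^sup>T = kron (Bmat n) ((Bmat n)\<^sup>T)"
  unfolding Bqy_def Bqx_def transpose_kron
  using kron_mult[OF Bmat_carrier_mat one_carrier_mat one_carrier_mat
      transpose_carrier_mat[THEN iffD2, OF Bmat_carrier_mat]]
  by simp

lemma Bux_left_inverse: "n > 0 \<Longrightarrow> kron (1\<^sub>m n) (Bmat_linv n) * Bux n = 1\<^sub>m (n * (n - 1))"
  unfolding Bux_def
  using kron_mult[OF one_carrier_mat one_carrier_mat Bmat_linv_carrier_mat Bmat_carrier_mat]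
  by (simp add: Bmat_linv_mult_Bmat kron_one_mat)

lemma Bvy_left_inverse: "n > 0 \<Longrightarrow> kron (Bmat_linv n) (1\<^sub>m n) * Bvy n = 1\<^sub>m ((n - 1) * n)"
  unfolding Bvy_def
  using kron_mult[OF Bmat_linv_carrier_mat Bmat_carrier_mat one_carrier_mat one_carrier_mat]
  by (simp add: Bmat_linv_mult_Bmat kron_one_mat)

lemma BB_mult_transpose_CC: "BB n * (CC n)\<^sup>T = 0\<^sub>m (n * n) ((n - 1) * (n - 1))"
proof -
  have K: "kron (Bmat n) (Bmat n) \<in> carrier_mat (n * n) ((n - 1) * (n - 1))"
    by (intro kron_carrier_mat Bmat_carrier_mat)
  have "BB n * (CC n)\<^sup>T = kron (Bmat n) (Bmat n) + - kron (Bmat n) (Bmat n)"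
    unfolding BB_def CC_def
    using hcat_mult_transpose_hcat[OF uminus_carrier_mat[OF Bux_carrier_mat] uminus_carrier_mat[OF Bvy_carrier_mat]
        uminus_carrier_mat[OF transpose_Bqy_carrier_mat] transpose_Bqx_carrier_mat]
    by (simp add: transpose_uminus Bux_mult_Bqy Bvy_mult_Bqx)
  then show ?thesis
    using minus_add_uminus_mat[OF K K] minus_r_inv_mat[OF K] by simp
qed

lemma BB_CC_kernel_trivial:
  assumes n: "n > 0" and x: "x \<in> carrier_vec (n * (n - 1) + (n - 1) * n)"
    and top: "BB n *\<^sub>v x = 0\<^sub>v (n * n)" and bottom: "CC n *\<^sub>v x = 0\<^sub>v ((n - 1) * (n - 1))"
  shows "x = 0\<^sub>v (n * (n - 1) + (n - 1) * n)"
proof -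
  have K: "kron (Bmat n) ((Bmat n)\<^sup>T) \<in> carrier_mat (n * (n - 1)) ((n - 1) * n)"
    by (intro kron_carrier_mat Bmat_carrier_mat transpose_carrier_mat[THEN iffD2])
  have cancel: "(- Bux n)\<^sup>T * - Bvy n + (- (Bqy n)\<^sup>T)\<^sup>T * (Bqx n)\<^sup>T = 0\<^sub>m (n * (n - 1)) ((n - 1) * n)"
    using minus_add_uminus_mat[OF K K] minus_r_inv_mat[OF K]
    by (simp add: transpose_uminus transpose_Bux_mult_Bvy Bqy_mult_transpose_Bqx)
  have Lx: "- kron (1\<^sub>m n) (Bmat_linv n) \<in> carrier_mat (n * (n - 1)) (n * n)"
    and Ly: "- kron (Bmat_linv n) (1\<^sub>m n) \<in> carrier_mat ((n - 1) * n) (n * n)"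
    by (intro uminus_carrier_mat kron_carrier_mat one_carrier_mat Bmat_linv_carrier_mat)+
  have "- kron (1\<^sub>m n) (Bmat_linv n) * - Bux n = 1\<^sub>m (n * (n - 1))"
    and "- kron (Bmat_linv n) (1\<^sub>m n) * - Bvy n = 1\<^sub>m ((n - 1) * n)"
    using Bux_left_inverse[OF n] Bvy_left_inverse[OF n] by simp_all
  then show ?thesis
    using hcat_kernel_trivial[OF uminus_carrier_mat[OF Bux_carrier_mat] uminus_carrier_mat[OF Bvy_carrier_mat]
        uminus_carrier_mat[OF transpose_Bqy_carrier_mat] transpose_Bqx_carrier_mat cancel _ _ x]
      left_inverse_kernel_trivial[OF Lx uminus_carrier_mat[OF Bux_carrier_mat]]
      left_inverse_kernel_trivial[OF Ly uminus_carrier_mat[OF Bvy_carrier_mat]]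
      top bottom
    unfolding BB_def CC_def by blast
qed

theorem corollary1:
  fixes n :: nat
  assumes "n \<ge> 2"
  shows "invertible_mat (AN n) \<and>
         inverts_mat (AN n) (pinv ((BB n)\<^sup>T * BB n) + pinv ((CC n)\<^sup>T * CC n)) \<and>
         inverts_mat (pinv ((BB n)\<^sup>T * BB n) + pinv ((CC n)\<^sup>T * CC n)) (AN n)"
  unfolding AN_def
  using gram_sum_orthogonal_inverse[OF BB_carrier_mat CC_carrier_mat BB_mult_transpose_CC BB_CC_kernel_trivial]
    assms by simp

end
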